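(* Under Slater's condition (there exists $\bar x\in X$ with $g(\bar x)<0$), for any $\tilde\mu\in\mathbb{R}^m_{\ge0}$ and any Slater vector $\bar x$, one has $\max_{\mu^*\in D^*_L}\|\mu^*\|\le r(\bar x,\tilde\mu)$; consequently $D^*_L\subseteq \bar M^{[i]}(\bar x,\tilde\mu)$ for every $i\in V$, and $D^*_L\subseteq M:=\bigcap_{i=1}^N M^{[i]}$, where $M^{[i]}$ are the sets produced by the Distributed Slater-vector Computation Algorithm.
   Context: Problem: minimize $f(x)=\sum_{i=1}^N f^{[i]}(x)$ subject to $g(x)\le0$, $x\in X=\bigcap_{i=1}^N X^{[i]}$, with convex $f^{[i]}$, nonempty compact convex $X^{[i]}$, convex components of $g:\mathbb{R}^n\to\mathbb{R}^m$, and nonempty feasible set. $\mathcal{L}(x,\mu)=f(x)+N\mu^Tg(x)$, $q_L(\mu)=\inf_{x\in X}\mathcal{L}(x,\mu)$, $D^*_L$ the set of maximizers of $q_L$ over $\mathbb{R}^m_{\ge0}$. $q^{[i]}(\mu)=\inf_{x\in X^{[i]}}(f^{[i]}(x)+\mu^Tg(x))$, $\gamma(x)=\min_\ell\{-g_\ell(x)\}$, $r(x,\mu)=\frac{N}{\gamma(x)}\max_{i}\{f^{[i]}(x)-q^{[i]}(\mu)\}$, $\bar M^{[i]}(\bar x,\tilde\mu)=\{\mu\in\mathbb{R}^m_{\ge0}:\|\mu\|\le r(\bar x,\tilde\mu)+\theta^{[i]}\}$ with fixed $\theta^{[i]}>0$. $M^{[i]}=\{\mu\in\mathbb{R}^m_{\ge0}:\|\mu\|\le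 Nb^*/c^*+\theta^{[i]}\}$ where $b^*=\max_j b^{[j]}(0)$, $c^*=\min_j c^{[j]}(0)$, with positive constants $b^{[i]}(0)\ge\sup_{x\in J^{[i]}}\{f^{[i]}(x)-q^{[i]}(\tilde\mu)\}$ and $c^{[i]}(0)\le\min_\ell\inf_{x\in J^{[i]}}\{-g_\ell(x)\}$, $J^{[i]}=\{x\in X^{[i]}:g(x)<0\}$. *)

theory Defs
  imports "HOL-Analysis.Analysis"
begin

definition nonneg_orthant :: "(real ^ 'm) set" where
  "nonneg_orthant = {\<mu>. \<forall>l. 0 \<le> \<mu> $ l}"

definition Xall :: "nat \<Rightarrow> (nat \<Rightarrow> (real ^ 'n) set) \<Rightarrow> (real ^ 'n) set" where
  "Xall N Xs = (\<Inter>i\<in>{1..N}. Xs i)"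

definition Lag :: "nat \<Rightarrow> (nat \<Rightarrow> real ^ 'n \<Rightarrow> real) \<Rightarrow> (real ^ 'n \<Rightarrow> real ^ 'm)
    \<Rightarrow> real ^ 'n \<Rightarrow> real ^ 'm \<Rightarrow> real" where
  "Lag N f g x \<mu> = (\<Sum>i\<in>{1..N}. f i x) + real N * (\<mu> \<bullet> g x)"

definition qL :: "nat \<Rightarrow> (nat \<Rightarrow> real ^ 'n \<Rightarrow> real) \<Rightarrow> (nat \<Rightarrow> (real ^ 'n) set)
    \<Rightarrow> (real ^ 'n \<Rightarrow> real ^ 'm) \<Rightarrow> real ^ 'm \<Rightarrow> real" where
  "qL N f Xs g \<mu> = Inf ((\<lambda>x. Lag N f g x \<mu>) ` Xall N Xs)"

definition DL :: "nat \<Rightarrow> (nat \<Rightarrow> real ^ 'n \<Rightarrow> real) \<Rightarrow> (nat \<Rightarrow> (real ^ 'n) set)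
    \<Rightarrow> (real ^ 'n \<Rightarrow> real ^ 'm) \<Rightarrow> (real ^ 'm) set" where
  "DL N f Xs g = {\<mu> \<in> nonneg_orthant. \<forall>\<nu> \<in> nonneg_orthant. qL N f Xs g \<nu> \<le> qL N f Xs g \<mu>}"

definition qloc :: "(nat \<Rightarrow> real ^ 'n \<Rightarrow> real) \<Rightarrow> (nat \<Rightarrow> (real ^ 'n) set)
    \<Rightarrow> (real ^ 'n \<Rightarrow> real ^ 'm) \<Rightarrow> nat \<Rightarrow> real ^ 'm \<Rightarrow> real" where
  "qloc f Xs g i \<mu> = Inf ((\<lambda>x. f i x + \<mu> \<bullet> g x) ` Xs i)"

definition gam :: "(real ^ 'n \<Rightarrow> real ^ 'm) \<Rightarrow> real ^ 'n \<Rightarrow> real" where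
  "gam g x = Min (range (\<lambda>l. - (g x $ l)))"

definition rfun :: "nat \<Rightarrow> (nat \<Rightarrow> real ^ 'n \<Rightarrow> real) \<Rightarrow> (nat \<Rightarrow> (real ^ 'n) set)
    \<Rightarrow> (real ^ 'n \<Rightarrow> real ^ 'm) \<Rightarrow> real ^ 'n \<Rightarrow> real ^ 'm \<Rightarrow> real" where
  "rfun N f Xs g x \<mu> =
     real N / gam g x * Max ((\<lambda>i. f i x - qloc f Xs g i \<mu>) ` {1..N})"

definition Mbar :: "nat \<Rightarrow> (nat \<Rightarrow> real ^ 'n \<Rightarrow> real) \<Rightarrow> (nat \<Rightarrow> (real ^ 'n) set)
    \<Rightarrow> (real ^ 'n \<Rightarrow> real ^ 'm) \<Rightarrow> (nat \<Rightarrow> real) \<Rightarrow> nat \<Rightarrow> real ^ 'n \<Rightarrow> real ^ 'm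
    \<Rightarrow> (real ^ 'm) set" where
  "Mbar N f Xs g \<theta> i x \<mu>t = {\<mu> \<in> nonneg_orthant. norm \<mu> \<le> rfun N f Xs g x \<mu>t + \<theta> i}"

definition Jset :: "(nat \<Rightarrow> (real ^ 'n) set) \<Rightarrow> (real ^ 'n \<Rightarrow> real ^ 'm) \<Rightarrow> nat
    \<Rightarrow> (real ^ 'n) set" where
  "Jset Xs g i = {x \<in> Xs i. \<forall>l. g x $ l < 0}"

text \<open>M^[i] built from the constants b^[j](0) (here b j) and c^[j](0) (here c j).\<close>
definition Mset :: "nat \<Rightarrow> (nat \<Rightarrow> real) \<Rightarrow> (nat \<Rightarrow> real) \<Rightarrow> (nat \<Rightarrow> real) \<Rightarrow> nat
    \<Rightarrow> (real ^ 'm) set" where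
  "Mset N b c \<theta> i = {\<mu> \<in> nonneg_orthant.
      norm \<mu> \<le> real N * Max (b ` {1..N}) / Min (c ` {1..N}) + \<theta> i}"

end

theory Submission
  imports Defs
begin

text \<open>
  Let \<mu>* be a maximiser of the dual function q_L and let \<gamma> = gam g xbar > 0
  be the Slater margin.  Three estimates are chained:
  (1) decomposition: for every \<mu> the local dual values satisfy
      \<Sum>i q^[i](\<mu>) \<le> q_L(\<mu>), because X \<subseteq> X^[i] and L(x,\<mu>) = \<Sum>i (f^[i](x) + \<mu>\<bullet>g(x));
  (2) optimality and the Slater point: q_L(\<mu>~) \<le> q_L(\<mu>*) \<le> L(xbar,\<mu>*);
  (3) the Slater inequality \<mu>*\<bullet>g(xbar) \<le> -\<gamma> \<parallel>\<mu>*\<parallel> on the nonnegative orthant.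
  Together they give N \<gamma> \<parallel>\<mu>*\<parallel> \<le> \<Sum>i (f^[i](xbar) - q^[i](\<mu>~)) \<le> N \<rho>, where \<rho> is the
  largest local gap, so \<gamma> \<parallel>\<mu>*\<parallel> \<le> \<rho>.  This yields \<parallel>\<mu>*\<parallel> \<le> r(xbar,\<mu>~) and hence
  the inclusion in every Mbar^[i]; since xbar lies in every J^[i], also \<rho> \<le> b* and
  c* \<le> \<gamma>, which gives the inclusion in every M^[i].
\<close>

text \<open>A continuous real function is bounded below on a compact set; this makes all
  the infima defining the dual functions behave like minima.\<close>
lemma bdd_below_continuous_image:
  fixes \<phi> :: "'a::topological_space \<Rightarrow> real"
  assumes "compact K" and "continuous_on K \<phi>"
  shows "bdd_below (\<phi> ` K)"
  using compact_continuous_image[OF assms(2,1)]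
  by (simp add: compact_imp_bounded bounded_imp_bdd_below)

lemma continuous_on_inner_components:
  fixes g :: "'a::topological_space \<Rightarrow> real ^ 'm"
  assumes "\<And>l. continuous_on S (\<lambda>x. g x $ l)"
  shows "continuous_on S (\<lambda>x. \<mu> \<bullet> g x)"
proof -
  have "continuous_on S (\<lambda>x. \<Sum>l\<in>UNIV. \<mu> $ l * g x $ l)"
    by (intro continuous_intros assms)
  then show ?thesis by (simp add: inner_vec_def)
qed

lemma continuous_on_Lag:
  assumes "\<forall>i\<in>{1..N}. continuous_on S (f i)" and "\<forall>l. continuous_on S (\<lambda>x. g x $ l)"
  shows "continuous_on S (\<lambda>x. Lag N f g x \<mu>)"
  unfolding Lag_def
  using assms
  by (intro continuous_on_add continuous_on_sum continuous_on_mult continuous_on_const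
        continuous_on_inner_components) auto

lemma qloc_le_local_Lagrangian:
  assumes "compact (Xs i)" and "continuous_on (Xs i) (\<lambda>x. f i x + \<mu> \<bullet> g x)"
    and "x \<in> Xs i"
  shows "qloc f Xs g i \<mu> \<le> f i x + \<mu> \<bullet> g x"
  unfolding qloc_def
  using bdd_below_continuous_image[OF assms(1,2)] assms(3) by (rule cINF_lower)

text \<open>Estimate (1): the sum of the local dual functions minorises q_L, since the
  global Lagrangian is the sum of the local ones and X is contained in each X^[i].\<close>
lemma sum_qloc_le_qL:
  assumes "Xall N Xs \<noteq> {}"
    and "\<And>i x. i \<in> {1..N} \<Longrightarrow> x \<in> Xs i \<Longrightarrow> qloc f Xs g i \<mu> \<le> f i x + \<mu> \<bullet> g x"
  shows "(\<Sum>i\<in>{1..N}. qloc f Xs g i \<mu>) \<le> qL N f Xs g \<mu>"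
  unfolding qL_def
proof (rule cINF_greatest[OF assms(1)])
  fix x assume "x \<in> Xall N Xs"
  then have "\<And>i. i \<in> {1..N} \<Longrightarrow> x \<in> Xs i" by (auto simp: Xall_def)
  then have "(\<Sum>i\<in>{1..N}. qloc f Xs g i \<mu>) \<le> (\<Sum>i\<in>{1..N}. f i x + \<mu> \<bullet> g x)"
    by (intro sum_mono assms(2))
  also have "\<dots> = Lag N f g x \<mu>" by (simp add: Lag_def sum.distrib)
  finally show "(\<Sum>i\<in>{1..N}. qloc f Xs g i \<mu>) \<le> Lag N f g x \<mu>" .
qed

lemma qL_le_Lag:
  assumes "Xall N Xs \<subseteq> K" and "compact K" and "continuous_on K (\<lambda>x. Lag N f g x \<mu>)"
    and "x \<in> Xall N Xs"
  shows "qL N f Xs g \<mu> \<le> Lag N f g x \<mu>"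
proof -
  have "bdd_below ((\<lambda>x. Lag N f g x \<mu>) ` Xall N Xs)"
    using bdd_below_continuous_image[OF assms(2,3)] assms(1) by (meson bdd_below_mono image_mono)
  then show ?thesis unfolding qL_def using assms(4) by (rule cINF_lower)
qed

text \<open>Estimate (3): on the nonnegative orthant, a vector all of whose components are
  at most -\<gamma> pairs with \<mu> to at most -\<gamma> \<parallel>\<mu>\<parallel> (the Euclidean norm is below the 1-norm).\<close>
lemma inner_le_neg_margin_norm:
  fixes \<mu> v :: "real ^ 'm"
  assumes mu: "\<mu> \<in> nonneg_orthant" and "0 \<le> \<gamma>" and v: "\<And>l. v $ l \<le> - \<gamma>"
  shows "\<mu> \<bullet> v \<le> - \<gamma> * norm \<mu>"
proof -
  have mu_l: "\<And>l. 0 \<le> \<mu> $ l" using mu by (simp add: nonneg_orthant_def)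
  have "\<mu> \<bullet> v \<le> (\<Sum>l\<in>UNIV. \<mu> $ l * (- \<gamma>))"
    unfolding inner_vec_def inner_real_def
    by (intro sum_mono mult_left_mono v mu_l)
  also have "\<dots> = - \<gamma> * (\<Sum>l\<in>UNIV. \<mu> $ l)" by (simp add: sum_distrib_left mult.commute)
  also have "\<dots> \<le> - \<gamma> * norm \<mu>"
    using norm_le_l1_cart[of \<mu>] mu_l \<open>0 \<le> \<gamma>\<close> by (simp add: mult_left_mono)
  finally show ?thesis .
qed

lemma gam_le: "gam g x \<le> - (g x $ l)"
  by (simp add: gam_def)

lemma gam_attained: "\<exists>l. gam g x = - (g x $ l)"
proof -
  have "gam g x \<in> range (\<lambda>l. - (g x $ l))" unfolding gam_def by (rule Min_in) auto
  then show ?thesis by auto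
qed

lemma gam_pos: "\<forall>l. g x $ l < 0 \<Longrightarrow> gam g x > 0"
  using gam_attained[of g x] by force

definition max_local_gap :: "nat \<Rightarrow> (nat \<Rightarrow> real ^ 'n \<Rightarrow> real) \<Rightarrow> (nat \<Rightarrow> (real ^ 'n) set)
    \<Rightarrow> (real ^ 'n \<Rightarrow> real ^ 'm) \<Rightarrow> real ^ 'n \<Rightarrow> real ^ 'm \<Rightarrow> real" where
  "max_local_gap N f Xs g x \<mu> = Max ((\<lambda>i. f i x - qloc f Xs g i \<mu>) ` {1..N})"

lemma rfun_eq: "rfun N f Xs g x \<mu> = real N / gam g x * max_local_gap N f Xs g x \<mu>"
  by (simp add: rfun_def max_local_gap_def)

lemma max_local_gap_le_Max_b:
  assumes "N \<ge> 1" and "\<forall>i\<in>{1..N}. xbar \<in> Jset Xs g i"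
    and "\<forall>i\<in>{1..N}. \<forall>x\<in>Jset Xs g i. f i x - qloc f Xs g i \<mu>t \<le> b i"
  shows "max_local_gap N f Xs g xbar \<mu>t \<le> Max (b ` {1..N})"
  unfolding max_local_gap_def
  using assms by (subst Max_le_iff) (auto intro!: Max_ge_iff[THEN iffD2])

lemma Min_c_le_gam:
  assumes "N \<ge> 1" and "\<forall>i\<in>{1..N}. xbar \<in> Jset Xs g i"
    and "\<forall>i\<in>{1..N}. \<forall>x\<in>Jset Xs g i. \<forall>l. c i \<le> - (g x $ l)"
  shows "Min (c ` {1..N}) \<le> gam g xbar"
proof -
  obtain l where "gam g xbar = - (g xbar $ l)" using gam_attained by blast
  then have "c 1 \<le> gam g xbar" using assms by auto
  moreover have "Min (c ` {1..N}) \<le> c 1" using assms(1) by simp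
  ultimately show ?thesis by linarith
qed

text \<open>For every dual optimal \<mu>, \<gamma> \<parallel>\<mu>\<parallel> \<le> \<rho>: chain estimates (1)-(3) and bound the
  sum of the N local gaps by N \<rho>.\<close>
lemma gam_norm_le_max_local_gap:
  assumes N_pos: "N \<ge> 1"
    and cont_f: "\<forall>i\<in>{1..N}. continuous_on UNIV (f i)"
    and cont_g: "\<forall>l. continuous_on UNIV (\<lambda>x. g x $ l)"
    and X_compact: "\<forall>i\<in>{1..N}. compact (Xs i)"
    and slater: "xbar \<in> Xall N Xs" "\<forall>l. g xbar $ l < 0"
    and mut_nonneg: "\<mu>t \<in> nonneg_orthant"
    and opt: "\<mu> \<in> DL N f Xs g"
  shows "gam g xbar * norm \<mu> \<le> max_local_gap N f Xs g xbar \<mu>t"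
proof -
  let ?\<gamma> = "gam g xbar" and ?I = "{1..N}"
  have mu: "\<mu> \<in> nonneg_orthant" and q_opt: "qL N f Xs g \<mu>t \<le> qL N f Xs g \<mu>"
    using opt mut_nonneg by (auto simp: DL_def)
  have lower: "(\<Sum>i\<in>?I. qloc f Xs g i \<mu>t) \<le> qL N f Xs g \<mu>t"
    using slater(1) cont_f cont_g X_compact
    by (intro sum_qloc_le_qL qloc_le_local_Lagrangian continuous_on_add
          continuous_on_inner_components) (auto intro: continuous_on_subset[OF _ subset_UNIV])
  have "Xall N Xs \<subseteq> Xs 1" using N_pos by (auto simp: Xall_def)
  then have upper: "qL N f Xs g \<mu> \<le> Lag N f g xbar \<mu>"
    using slater(1) N_pos X_compact cont_f cont_g
    by (intro qL_le_Lag[where K = "Xs 1"] continuous_on_Lag)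
      (auto intro: continuous_on_subset[OF _ subset_UNIV])
  have slater_ineq: "\<mu> \<bullet> g xbar \<le> - ?\<gamma> * norm \<mu>"
    using mu gam_pos[of g xbar, OF slater(2)] gam_le[of g xbar]
    by (intro inner_le_neg_margin_norm) (auto simp: le_minus_iff)
  have "real N * (?\<gamma> * norm \<mu>) \<le> (\<Sum>i\<in>?I. f i xbar) - (\<Sum>i\<in>?I. qloc f Xs g i \<mu>t)"
    using lower q_opt upper mult_left_mono[OF slater_ineq, of "real N"]
    by (simp add: Lag_def)
  also have "\<dots> = (\<Sum>i\<in>?I. f i xbar - qloc f Xs g i \<mu>t)" by (simp add: sum_subtractf)
  also have "\<dots> \<le> (\<Sum>i\<in>?I. max_local_gap N f Xs g xbar \<mu>t)"
    unfolding max_local_gap_def by (intro sum_mono Max_ge) auto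
  also have "\<dots> = real N * max_local_gap N f Xs g xbar \<mu>t" by simp
  finally show ?thesis using N_pos by simp
qed

lemma radius_comparison:
  fixes t \<gamma> \<rho> B C :: real
  assumes "0 \<le> t" and "\<gamma> * t \<le> \<rho>" and "0 < \<gamma>" and "\<rho> \<le> B" and "0 < C" and "C \<le> \<gamma>"
    and "1 \<le> real N"
  shows "t \<le> real N / \<gamma> * \<rho> \<and> t \<le> real N * B / C"
proof -
  have t_le: "t \<le> \<rho> / \<gamma>" and "0 \<le> \<rho>"
    using assms(1-3) by (auto simp: field_simps intro: order_trans[rotated])
  have "\<rho> / \<gamma> \<le> B / C"
    using assms(4-6) \<open>0 \<le> \<rho>\<close> by (intro frac_le) auto
  have N_mono: "x \<le> real N * x" if "0 \<le> x" for x :: real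
    using that assms(7) mult_right_mono[of 1 "real N" x] by simp
  have "t \<le> real N * (\<rho> / \<gamma>)"
    using t_le N_mono[of "\<rho> / \<gamma>"] \<open>0 \<le> \<rho>\<close> assms(3) by simp
  moreover have "t \<le> real N * (B / C)"
    using t_le \<open>\<rho> / \<gamma> \<le> B / C\<close> N_mono[of "B / C"] \<open>0 \<le> \<rho>\<close> assms(4,5) by simp
  ultimately show ?thesis by simp
qed

theorem mainTheorem3:
  fixes N :: nat
    and f :: "nat \<Rightarrow> real ^ 'n \<Rightarrow> real"
    and Xs :: "nat \<Rightarrow> (real ^ 'n) set"
    and g :: "real ^ 'n \<Rightarrow> real ^ 'm"
    and \<theta> b c :: "nat \<Rightarrow> real"
    and xbar :: "real ^ 'n"
    and \<mu>t :: "real ^ 'm"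
  assumes N_pos: "N \<ge> 1"
    and f_convex: "\<forall>i\<in>{1..N}. convex_on UNIV (f i)"
    and X_compact: "\<forall>i\<in>{1..N}. compact (Xs i)"
    and X_convex: "\<forall>i\<in>{1..N}. convex (Xs i)"
    and X_nonempty: "\<forall>i\<in>{1..N}. Xs i \<noteq> {}"
    and g_convex: "\<forall>l. convex_on UNIV (\<lambda>x. g x $ l)"
    and feasible: "{x \<in> Xall N Xs. \<forall>l. g x $ l \<le> 0} \<noteq> {}"
    and slater: "xbar \<in> Xall N Xs" "\<forall>l. g xbar $ l < 0"
    and mut_nonneg: "\<mu>t \<in> nonneg_orthant"
    and theta_pos: "\<forall>i\<in>{1..N}. \<theta> i > 0"
    and b_bound: "\<forall>i\<in>{1..N}. b i > 0 \<and>
                    (\<forall>x\<in>Jset Xs g i. f i x - qloc f Xs g i \<mu>t \<le> b i)"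
    and c_bound: "\<forall>i\<in>{1..N}. c i > 0 \<and>
                    (\<forall>x\<in>Jset Xs g i. \<forall>l. c i \<le> - (g x $ l))"
  shows "(\<forall>\<mu>\<in>DL N f Xs g. norm \<mu> \<le> rfun N f Xs g xbar \<mu>t)
       \<and> (\<forall>i\<in>{1..N}. DL N f Xs g \<subseteq> Mbar N f Xs g \<theta> i xbar \<mu>t)
       \<and> DL N f Xs g \<subseteq> (\<Inter>i\<in>{1..N}. Mset N b c \<theta> i)"
proof -
  define \<gamma> \<rho> where "\<gamma> = gam g xbar" and "\<rho> = max_local_gap N f Xs g xbar \<mu>t"
  define B C where "B = Max (b ` {1..N})" and "C = Min (c ` {1..N})"
  have "\<forall>i\<in>{1..N}. continuous_on UNIV (f i)" "\<forall>l. continuous_on UNIV (\<lambda>x. g x $ l)"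
    using f_convex g_convex convex_on_continuous[OF open_UNIV] by blast+
  then have key: "\<gamma> * norm \<mu> \<le> \<rho>" if "\<mu> \<in> DL N f Xs g" for \<mu>
    using gam_norm_le_max_local_gap N_pos X_compact slater mut_nonneg that
    unfolding \<gamma>_def \<rho>_def by blast
  have \<gamma>_pos: "\<gamma> > 0" using gam_pos slater(2) by (simp add: \<gamma>_def)
  have J: "\<forall>i\<in>{1..N}. xbar \<in> Jset Xs g i" using slater by (auto simp: Jset_def Xall_def)
  have "\<rho> \<le> B" unfolding \<rho>_def B_def
    by (rule max_local_gap_le_Max_b) (use N_pos J b_bound in auto)
  have "C \<le> \<gamma>" unfolding C_def \<gamma>_def
    by (rule Min_c_le_gam) (use N_pos J c_bound in auto)
  have "0 < C" using N_pos c_bound by (simp add: C_def)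
  have bound: "norm \<mu> \<le> real N / \<gamma> * \<rho> \<and> norm \<mu> \<le> real N * B / C"
    if "\<mu> \<in> DL N f Xs g" for \<mu>
    using radius_comparison[OF norm_ge_zero key[OF that]] \<gamma>_pos \<open>\<rho> \<le> B\<close> \<open>0 < C\<close>
      \<open>C \<le> \<gamma>\<close> N_pos by simp
  then show ?thesis using theta_pos
    by (fastforce simp: rfun_eq Mbar_def Mset_def DL_def \<gamma>_def \<rho>_def B_def C_def)
qed

end
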